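(* Let $n\ge 2$ and let $P\in\mathrm{Mat}(n^2,\mathbb{C})$ be an orthogonal projection (i.e. $P^*=P$, $P^2=P$) of rank $r$. Put $P_1=P\otimes I_n$ and $P_2=I_n\otimes P$ in $\mathrm{Mat}(n^3,\mathbb{C})$. Then (a) $\operatorname{tr}_3(P_1P_2)\le rn$, and equality holds if and only if $P=0$ or $P=I_n\otimes I_n$; (b) $\operatorname{tr}_3\big((P_1P_2)^2\big)\le \operatorname{tr}_3(P_1P_2)$, and equality holds if and only if $P_1P_2=P_2P_1$.
   Context: $I_n$ is the $n\times n$ identity matrix, $\otimes$ is the Kronecker product, $P^*$ is the conjugate transpose, and $\operatorname{tr}_3$ denotes the ordinary matrix trace on $\mathrm{Mat}(n^3,\mathbb{C})$. *)

theory Defs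
  imports "Jordan_Normal_Form.Schur_Decomposition" "Jordan_Normal_Form.DL_Rank"
begin

definition mtrace :: "'a::comm_ring_1 mat \<Rightarrow> 'a" where
  "mtrace A = (\<Sum>i<dim_row A. A $$ (i, i))"

(* Kronecker product, standard block convention: (A \<otimes> B)[(i,k),(j,l)] = A[i,j] * B[k,l] *)
definition kron :: "'a::times mat \<Rightarrow> 'a mat \<Rightarrow> 'a mat" where
  "kron A B = mat (dim_row A * dim_row B) (dim_col A * dim_col B)
     (\<lambda>(i, j). A $$ (i div dim_row B, j div dim_col B) * B $$ (i mod dim_row B, j mod dim_col B))"

end

theory Submission
  imports Defs
begin

(* For an orthogonal projection Q, the compression X Q X^* has trace |XQ|^2, the squared
   Frobenius norm of XQ. For orthogonal projections A and B this gives
     tr (AB) = |AB|^2,   tr A - tr (AB) = |A (1 - B)|^2,   tr (AB) - tr ((AB)^2) = |AB (1 - A)|^2,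
   so the first difference vanishes iff AB = A and the second iff AB = ABA, i.e. iff AB = BA.
   The projections P1 = P (x) I and P2 = I (x) P both have trace r n (the trace of an idempotent is
   its rank), so equality in (a) means P1 = P2 (AB = A and BA = B give A = A^* = BA = B). Reading
   the entries of P (x) I = I (x) P in two ways shows that P is a scalar matrix, hence 0 or I. *)

section \<open>Adjoints, traces and the Frobenius norm\<close>

lemma index_mult_mat_sum:
  assumes "A \<in> carrier_mat m k" "B \<in> carrier_mat k l" "i < m" "j < l"
  shows "(A * B) $$ (i, j) = (\<Sum>t<k. A $$ (i, t) * B $$ (t, j))"
  using assms by (simp add: scalar_prod_def atLeast0LessThan)

lemma mat_adjoint_dims[simp]:
  "dim_row (mat_adjoint A) = dim_col A" "dim_col (mat_adjoint A) = dim_row A"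
  by (simp_all add: mat_adjoint_def)

lemma mat_adjoint_carrier[simp]: "A \<in> carrier_mat m k \<Longrightarrow> mat_adjoint A \<in> carrier_mat k m"
  unfolding carrier_mat_def by simp

lemma index_mat_adjoint[simp]:
  fixes A :: "complex mat"
  shows "i < dim_col A \<Longrightarrow> j < dim_row A \<Longrightarrow> mat_adjoint A $$ (i, j) = cnj (A $$ (j, i))"
  by (simp add: mat_adjoint_def mat_of_rows_index)

lemma mat_adjoint_mult:
  fixes A B :: "complex mat"
  assumes A: "A \<in> carrier_mat m k" and B: "B \<in> carrier_mat k l"
  shows "mat_adjoint (A * B) = mat_adjoint B * mat_adjoint A"
proof (rule eq_matI)
  fix i j assume "i < dim_row (mat_adjoint B * mat_adjoint A)" "j < dim_col (mat_adjoint B * mat_adjoint A)"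
  then have i: "i < l" and j: "j < m" using A B by auto
  have "mat_adjoint (A * B) $$ (i, j) = (\<Sum>t<k. cnj (A $$ (j, t)) * cnj (B $$ (t, i)))"
    using A B i j by (simp add: index_mult_mat_sum[OF A B] del: index_mult_mat(1))
  also have "\<dots> = (mat_adjoint B * mat_adjoint A) $$ (i, j)"
    using A B i j by (simp add: index_mult_mat_sum[of _ l k _ m] mult.commute del: index_mult_mat(1))
  finally show "mat_adjoint (A * B) $$ (i, j) = (mat_adjoint B * mat_adjoint A) $$ (i, j)" .
qed (use A B in auto)

lemma mat_adjoint_minus:
  fixes A B :: "complex mat"
  assumes "A \<in> carrier_mat m k" "B \<in> carrier_mat m k"
  shows "mat_adjoint (A - B) = mat_adjoint A - mat_adjoint B"
  by (rule eq_matI) (use assms in auto)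

lemma mat_adjoint_one[simp]: "mat_adjoint (1\<^sub>m n :: complex mat) = 1\<^sub>m n"
  by (rule eq_matI) auto

lemma mtrace_mult_comm:
  fixes A B :: "'a :: comm_ring_1 mat"
  assumes A: "A \<in> carrier_mat m k" and B: "B \<in> carrier_mat k m"
  shows "mtrace (A * B) = mtrace (B * A)"
proof -
  have "mtrace (A * B) = (\<Sum>i<m. \<Sum>t<k. A $$ (i, t) * B $$ (t, i))"
    using A B by (simp add: mtrace_def index_mult_mat_sum[OF A B] del: index_mult_mat(1))
  also have "\<dots> = (\<Sum>t<k. \<Sum>i<m. B $$ (t, i) * A $$ (i, t))"
    by (subst sum.swap) (simp add: mult.commute)
  also have "\<dots> = mtrace (B * A)"
    using A B by (simp add: mtrace_def index_mult_mat_sum[OF B A] del: index_mult_mat(1))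
  finally show ?thesis .
qed

lemma mtrace_minus:
  fixes A B :: "'a :: comm_ring_1 mat"
  assumes "A \<in> carrier_mat m m" "B \<in> carrier_mat m m"
  shows "mtrace (A - B) = mtrace A - mtrace B"
  using assms by (simp add: mtrace_def sum_subtractf)

lemma mtrace_one[simp]: "mtrace (1\<^sub>m n :: 'a :: comm_ring_1 mat) = of_nat n"
  by (simp add: mtrace_def)

lemma mtrace_mult_adjoint:
  fixes X :: "complex mat"
  assumes X: "X \<in> carrier_mat m k"
  shows "mtrace (X * mat_adjoint X) = of_real (\<Sum>i<m. \<Sum>j<k. (cmod (X $$ (i, j)))\<^sup>2)"
proof -
  have "mtrace (X * mat_adjoint X) = (\<Sum>i<m. \<Sum>j<k. X $$ (i, j) * cnj (X $$ (i, j)))"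
    using X by (simp add: mtrace_def index_mult_mat_sum[OF X mat_adjoint_carrier[OF X]] del: index_mult_mat(1))
  then show ?thesis
    by (simp only: of_real_sum complex_norm_square)
qed

lemma mtrace_mult_adjoint_real:
  fixes X :: "complex mat"
  assumes "X \<in> carrier_mat m k"
  shows "mtrace (X * mat_adjoint X) \<in> \<real>"
  unfolding mtrace_mult_adjoint[OF assms] by (rule Reals_of_real)

lemma mtrace_mult_adjoint_nonneg:
  fixes X :: "complex mat"
  assumes "X \<in> carrier_mat m k"
  shows "Re (mtrace (X * mat_adjoint X)) \<ge> 0"
  unfolding mtrace_mult_adjoint[OF assms] Re_complex_of_real by (intro sum_nonneg zero_le_power2)

lemma mtrace_mult_adjoint_eq_0_iff:
  fixes X :: "complex mat"
  assumes X: "X \<in> carrier_mat m k"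
  shows "mtrace (X * mat_adjoint X) = 0 \<longleftrightarrow> X = 0\<^sub>m m k"
proof
  assume "mtrace (X * mat_adjoint X) = 0"
  then have "(\<Sum>i<m. \<Sum>j<k. (cmod (X $$ (i, j)))\<^sup>2) = 0"
    unfolding mtrace_mult_adjoint[OF X] of_real_eq_0_iff .
  then have "\<forall>i<m. \<forall>j<k. X $$ (i, j) = 0"
    by (simp add: sum_nonneg_eq_0_iff sum_nonneg)
  then show "X = 0\<^sub>m m k" using X by (intro eq_matI) auto
next
  assume "X = 0\<^sub>m m k"
  then have "\<forall>i<m. \<forall>j<k. X $$ (i, j) = 0" by simp
  then show "mtrace (X * mat_adjoint X) = 0"
    unfolding mtrace_mult_adjoint[OF X] by simp
qed

lemma mat_minus_eq_0_iff:
  fixes A B :: "'a :: ab_group_add mat"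
  assumes "A \<in> carrier_mat m k" "B \<in> carrier_mat m k"
  shows "A - B = 0\<^sub>m m k \<longleftrightarrow> A = B"
proof
  assume "A - B = 0\<^sub>m m k"
  then have "\<forall>i<m. \<forall>j<k. A $$ (i, j) - B $$ (i, j) = 0"
    using assms by (metis index_minus_mat(1) index_zero_mat(1) carrier_matD)
  then show "A = B" using assms by (intro eq_matI) auto
qed (use assms in simp)

section \<open>Orthogonal projections\<close>

definition orthogonal_projection :: "nat \<Rightarrow> complex mat \<Rightarrow> bool" where
  "orthogonal_projection n A \<longleftrightarrow> A \<in> carrier_mat n n \<and> mat_adjoint A = A \<and> A * A = A"

lemma orthogonal_projectionD:
  assumes "orthogonal_projection n A"
  shows "A \<in> carrier_mat n n" "mat_adjoint A = A" "A * A = A"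
  using assms by (auto simp: orthogonal_projection_def)

lemma orthogonal_projection_complement:
  assumes "orthogonal_projection n B"
  shows "orthogonal_projection n (1\<^sub>m n - B)"
proof -
  note B = orthogonal_projectionD[OF assms]
  have C: "1\<^sub>m n - B \<in> carrier_mat n n"
    using B by (simp add: minus_carrier_mat)
  have "(1\<^sub>m n - B) * (1\<^sub>m n - B) = 1\<^sub>m n * (1\<^sub>m n - B) - B * (1\<^sub>m n - B)"
    by (rule minus_mult_distrib_mat[OF one_carrier_mat B(1) C])
  also have "\<dots> = (1\<^sub>m n - B) - (B * 1\<^sub>m n - B * B)"
    using B C by (simp add: mult_minus_distrib_mat[OF B(1) one_carrier_mat B(1)])
  also have "\<dots> = 1\<^sub>m n - B"
    using B by (intro eq_matI) auto
  finally show ?thesis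
    using B C by (simp add: orthogonal_projection_def mat_adjoint_minus[of _ n n])
qed

lemma mtrace_compression_eq_mult_adjoint:
  assumes Q: "orthogonal_projection n Q" and X: "X \<in> carrier_mat m n"
  shows "mtrace (X * Q * mat_adjoint X) = mtrace ((X * Q) * mat_adjoint (X * Q))"
proof -
  note Q' = orthogonal_projectionD[OF Q]
  have XA: "mat_adjoint X \<in> carrier_mat n m" using X by simp
  have "(X * Q) * mat_adjoint (X * Q) = X * Q * (Q * mat_adjoint X)"
    by (simp add: mat_adjoint_mult[OF X Q'(1)] Q'(2))
  also have "\<dots> = X * (Q * Q) * mat_adjoint X"
    using X Q'(1) XA by (simp add: assoc_mult_mat[of _ m n _ n _ m] assoc_mult_mat[of _ n n _ n _ m])
  finally show ?thesis by (simp only: Q'(3))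
qed

lemma mtrace_compression_complement:
  assumes Q: "Q \<in> carrier_mat n n" and X: "X \<in> carrier_mat m n"
  shows "mtrace (X * (1\<^sub>m n - Q) * mat_adjoint X)
    = mtrace (X * mat_adjoint X) - mtrace (X * Q * mat_adjoint X)"
proof -
  have "X * (1\<^sub>m n - Q) = X - X * Q"
    using mult_minus_distrib_mat[OF X one_carrier_mat Q] X by simp
  then have "X * (1\<^sub>m n - Q) * mat_adjoint X = X * mat_adjoint X - X * Q * mat_adjoint X"
    using minus_mult_distrib_mat[of X m n "X * Q" "mat_adjoint X" m] X Q by simp
  moreover have "X * mat_adjoint X \<in> carrier_mat m m" "X * Q * mat_adjoint X \<in> carrier_mat m m"
    using X Q by auto
  ultimately show ?thesis
    by (simp add: mtrace_minus)
qed

lemma mtrace_proj_mult_eq_mult_adjoint: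
  assumes A: "orthogonal_projection n A" and B: "orthogonal_projection n B"
  shows "mtrace (A * B) = mtrace ((A * B) * mat_adjoint (A * B))"
proof -
  note A' = orthogonal_projectionD[OF A] and B' = orthogonal_projectionD[OF B]
  have "mtrace (A * B * A) = mtrace (A * (B * A))"
    using A' B' by (simp add: assoc_mult_mat[of _ n n _ n _ n])
  also have "\<dots> = mtrace (B * A * A)"
    using A' B' by (intro mtrace_mult_comm) auto
  also have "\<dots> = mtrace (B * A)"
    using A' B' by (simp add: assoc_mult_mat[of _ n n _ n _ n])
  also have "\<dots> = mtrace (A * B)"
    using A' B' by (intro mtrace_mult_comm) auto
  finally have "mtrace (A * B) = mtrace (A * B * mat_adjoint A)"
    using A' by simp
  then show ?thesis
    using mtrace_compression_eq_mult_adjoint[OF B A'(1)] by simp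
qed

lemma mtrace_proj_mult:
  assumes A: "orthogonal_projection n A" and B: "orthogonal_projection n B"
  shows "mtrace (A * B) \<in> \<real>"
    and "Re (mtrace (A * B)) \<le> Re (mtrace A)"
    and "mtrace (A * B) = mtrace A \<longleftrightarrow> A * B = A"
proof -
  note A' = orthogonal_projectionD[OF A] and B' = orthogonal_projectionD[OF B]
  define X where "X = A * (1\<^sub>m n - B)"
  have X: "X \<in> carrier_mat n n" and X_eq: "X = A - A * B"
    using A' B' mult_minus_distrib_mat[OF A'(1) one_carrier_mat B'(1)] by (auto simp: X_def)
  have "mtrace A - mtrace (A * B) = mtrace (A * (1\<^sub>m n - B) * mat_adjoint A)"
    using mtrace_compression_complement[OF B'(1) A'(1)] A' mtrace_proj_mult_eq_mult_adjoint[OF A B]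
      mtrace_compression_eq_mult_adjoint[OF B A'(1)] by simp
  also have "\<dots> = mtrace (X * mat_adjoint X)"
    unfolding X_def
    by (rule mtrace_compression_eq_mult_adjoint[OF orthogonal_projection_complement[OF B] A'(1)])
  finally have diff: "mtrace (A * B) = mtrace A - mtrace (X * mat_adjoint X)"
    by (simp add: algebra_simps)
  show "mtrace (A * B) \<in> \<real>"
    using mtrace_proj_mult_eq_mult_adjoint[OF A B] mtrace_mult_adjoint_real[of "A * B" n n] A' B'
    by auto
  show "Re (mtrace (A * B)) \<le> Re (mtrace A)"
    unfolding diff using mtrace_mult_adjoint_nonneg[OF X] by simp
  have "mtrace (A * B) = mtrace A \<longleftrightarrow> X = 0\<^sub>m n n"
    unfolding diff mtrace_mult_adjoint_eq_0_iff[OF X, symmetric] by auto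
  also have "\<dots> \<longleftrightarrow> A * B = A"
    unfolding X_eq using mat_minus_eq_0_iff[of A n n "A * B"] A' B' by auto
  finally show "mtrace (A * B) = mtrace A \<longleftrightarrow> A * B = A" .
qed

lemma mtrace_proj_mult_square:
  assumes A: "orthogonal_projection n A" and B: "orthogonal_projection n B"
  shows "mtrace (A * B * (A * B)) \<in> \<real>"
    and "Re (mtrace (A * B * (A * B))) \<le> Re (mtrace (A * B))"
    and "mtrace (A * B * (A * B)) = mtrace (A * B) \<longleftrightarrow> A * B = B * A"
proof -
  note A' = orthogonal_projectionD[OF A] and B' = orthogonal_projectionD[OF B]
  note assoc = assoc_mult_mat[of _ n n _ n _ n]
  have idem_left: "A * (A * M) = A * M" if "M \<in> carrier_mat n n" for M
    by (simp only: assoc_mult_mat[OF A'(1) A'(1) that, symmetric] A'(3))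
  have AB: "A * B \<in> carrier_mat n n" and adj_AB: "mat_adjoint (A * B) = B * A"
    using A' B' by (auto simp: mat_adjoint_mult[OF A'(1) B'(1)])
  define X where "X = A * B * (1\<^sub>m n - A)"
  have X: "X \<in> carrier_mat n n" and X_eq: "X = A * B - A * B * A"
    using A' B' mult_minus_distrib_mat[OF AB one_carrier_mat A'(1)] by (auto simp: X_def)
  have "mtrace (A * B * A * mat_adjoint (A * B)) = mtrace (A * (A * B * (A * B)))"
    using A' B' mtrace_mult_comm[of "A * B * (A * B)" n n A] by (simp add: adj_AB assoc)
  also have "\<dots> = mtrace (A * B * (A * B))"
    unfolding assoc_mult_mat[OF A'(1) B'(1) AB] idem_left[OF mult_carrier_mat[OF B'(1) AB]] ..
  finally have "mtrace (A * B) - mtrace (A * B * (A * B)) = mtrace (A * B * (1\<^sub>m n - A) * mat_adjoint (A * B))"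
    using mtrace_compression_complement[OF A'(1) AB] mtrace_proj_mult_eq_mult_adjoint[OF A B] by simp
  also have "\<dots> = mtrace (X * mat_adjoint X)"
    unfolding X_def by (rule mtrace_compression_eq_mult_adjoint[OF orthogonal_projection_complement[OF A] AB])
  finally have diff: "mtrace (A * B * (A * B)) = mtrace (A * B) - mtrace (X * mat_adjoint X)"
    by (simp add: algebra_simps)
  show "mtrace (A * B * (A * B)) \<in> \<real>"
    unfolding diff using mtrace_mult_adjoint_real[OF X] mtrace_proj_mult(1)[OF A B]
    by (rule Reals_diff[rotated])
  show "Re (mtrace (A * B * (A * B))) \<le> Re (mtrace (A * B))"
    unfolding diff using mtrace_mult_adjoint_nonneg[OF X] by simp
  have "mtrace (A * B * (A * B)) = mtrace (A * B) \<longleftrightarrow> X = 0\<^sub>m n n"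
    unfolding diff mtrace_mult_adjoint_eq_0_iff[OF X, symmetric] by auto
  also have "\<dots> \<longleftrightarrow> A * B = A * B * A"
    unfolding X_eq using mat_minus_eq_0_iff[of "A * B" n n "A * B * A"] A' B' by auto
  also have "\<dots> \<longleftrightarrow> A * B = B * A"
  proof
    assume ABA: "A * B = A * B * A"
    have "B * A = mat_adjoint (A * B * A)"
      using ABA adj_AB by simp
    also have "\<dots> = A * B * A"
      unfolding mat_adjoint_mult[OF AB A'(1)] adj_AB A'(2) using A' B' by (simp add: assoc)
    finally show "A * B = B * A"
      using ABA by simp
  next
    assume "A * B = B * A"
    then show "A * B = A * B * A"
      using A' B' by (simp add: assoc idem_left)
  qed
  finally show "mtrace (A * B * (A * B)) = mtrace (A * B) \<longleftrightarrow> A * B = B * A" .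
qed

lemma mtrace_proj_mult_eq_iff:
  assumes A: "orthogonal_projection n A" and B: "orthogonal_projection n B"
    and tr: "mtrace A = mtrace B"
  shows "mtrace (A * B) = mtrace A \<longleftrightarrow> A = B"
proof
  note A' = orthogonal_projectionD[OF A] and B' = orthogonal_projectionD[OF B]
  assume "mtrace (A * B) = mtrace A"
  then have AB: "A * B = A" and "mtrace (B * A) = mtrace B"
    using mtrace_proj_mult(3)[OF A B] mtrace_mult_comm[OF A'(1) B'(1)] tr by auto
  then have BA: "B * A = B"
    using mtrace_proj_mult(3)[OF B A] by simp
  have "A = mat_adjoint (A * B)" using AB A'(2) by simp
  also have "\<dots> = B" using BA A' B' by (simp add: mat_adjoint_mult[OF A'(1) B'(1)])
  finally show "A = B" .
next
  assume "A = B"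
  then show "mtrace (A * B) = mtrace A"
    using orthogonal_projectionD(3)[OF A] by simp
qed

section \<open>Kronecker products\<close>

lemma sum_lessThan_mult_split:
  "(\<Sum>z<c * d. g z) = (\<Sum>u<c. \<Sum>v<d. g (u * d + v))" for g :: "nat \<Rightarrow> 'a :: comm_monoid_add"
proof -
  have "(\<Sum>z<c * d. g z) = (\<Sum>u<c. sum g {u * d..<u * d + d})"
    by (rule sum.nat_group[symmetric])
  also have "\<dots> = (\<Sum>u<c. \<Sum>v<d. g (u * d + v))"
    by (rule sum.cong[OF refl], subst sum.atLeastLessThan_shift_0) (simp add: atLeast0LessThan)
  finally show ?thesis .
qed

lemma mult_add_less_mult: "u < c \<Longrightarrow> v < d \<Longrightarrow> u * d + v < c * (d :: nat)"
proof -
  assume "u < c" "v < d"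
  then have "u * d + v < Suc u * d" by simp
  also have "\<dots> \<le> c * d" using \<open>u < c\<close> by (intro mult_right_mono) auto
  finally show ?thesis .
qed

lemma less_mult_cases:
  fixes i a b :: nat
  assumes "i < a * b"
  obtains x k where "x < a" "k < b" "i = x * b + k"
proof
  have "b > 0" using assms by (auto intro: Nat.gr0I)
  then show "i div b < a" "i mod b < b"
    using assms by (auto simp: less_mult_imp_div_less mult.commute)
qed simp

lemma mult_add_eq_mult_add_iff:
  fixes x y k l b :: nat
  assumes "k < b" "l < b"
  shows "x * b + k = y * b + l \<longleftrightarrow> x = y \<and> k = l"
proof
  assume eq: "x * b + k = y * b + l"
  have "(x * b + k) div b = (y * b + l) div b" "(x * b + k) mod b = (y * b + l) mod b"
    by (simp_all only: eq)
  then show "x = y \<and> k = l" using assms by simp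
qed simp

lemma kron_dims[simp]:
  "dim_row (kron A B) = dim_row A * dim_row B" "dim_col (kron A B) = dim_col A * dim_col B"
  by (simp_all add: kron_def)

lemma kron_carrier:
  "A \<in> carrier_mat a c \<Longrightarrow> B \<in> carrier_mat b d \<Longrightarrow> kron A B \<in> carrier_mat (a * b) (c * d)"
  unfolding carrier_mat_def by simp

lemma index_kron:
  assumes "A \<in> carrier_mat a c" "B \<in> carrier_mat b d" "x < a" "k < b" "y < c" "l < d"
  shows "kron A B $$ (x * b + k, y * d + l) = A $$ (x, y) * B $$ (k, l)"
  using assms by (simp add: kron_def mult_add_less_mult)

lemma kron_mult:
  fixes A B C D :: "'a :: comm_semiring_1 mat"
  assumes A: "A \<in> carrier_mat a c" and B: "B \<in> carrier_mat b d"
    and C: "C \<in> carrier_mat c e" and D: "D \<in> carrier_mat d f"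
  shows "kron A B * kron C D = kron (A * C) (B * D)"
proof (rule eq_matI)
  fix i j assume "i < dim_row (kron (A * C) (B * D))" "j < dim_col (kron (A * C) (B * D))"
  then have i: "i < a * b" and j: "j < e * f" using A B C D by auto
  obtain x k where x: "x < a" and k: "k < b" and i_eq: "i = x * b + k"
    by (rule less_mult_cases[OF i])
  obtain y l where y: "y < e" and l: "l < f" and j_eq: "j = y * f + l"
    by (rule less_mult_cases[OF j])
  have "(kron A B * kron C D) $$ (i, j)
      = (\<Sum>u<c. \<Sum>v<d. kron A B $$ (i, u * d + v) * kron C D $$ (u * d + v, j))"
    using A B C D i j
    by (simp add: index_mult_mat_sum[of _ "a * b" "c * d" _ "e * f"] kron_carrier sum_lessThan_mult_split
        del: index_mult_mat(1))
  also have "\<dots> = (\<Sum>u<c. \<Sum>v<d. (A $$ (x, u) * C $$ (u, y)) * (B $$ (k, v) * D $$ (v, l)))"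
  proof (intro sum.cong refl)
    fix u v assume "u \<in> {..<c}" "v \<in> {..<d}"
    then show "kron A B $$ (i, u * d + v) * kron C D $$ (u * d + v, j)
        = (A $$ (x, u) * C $$ (u, y)) * (B $$ (k, v) * D $$ (v, l))"
      unfolding i_eq j_eq using index_kron[OF A B x k, of u v] index_kron[OF C D _ _ y l, of u v]
      by (simp add: mult_ac)
  qed
  also have "\<dots> = (A * C) $$ (x, y) * (B * D) $$ (k, l)"
    using A B C D x k y l
    by (simp add: sum_product index_mult_mat_sum[of _ a c _ e] index_mult_mat_sum[of _ b d _ f]
        del: index_mult_mat(1))
  also have "\<dots> = kron (A * C) (B * D) $$ (i, j)"
    unfolding i_eq j_eq using A B C D x k y l by (intro index_kron[symmetric]) auto
  finally show "(kron A B * kron C D) $$ (i, j) = kron (A * C) (B * D) $$ (i, j)" .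
qed (use A B C D in auto)

lemma mtrace_kron:
  fixes A B :: "'a :: comm_ring_1 mat"
  assumes A: "A \<in> carrier_mat a a" and B: "B \<in> carrier_mat b b"
  shows "mtrace (kron A B) = mtrace A * mtrace B"
proof -
  have "mtrace (kron A B) = (\<Sum>u<a. \<Sum>v<b. kron A B $$ (u * b + v, u * b + v))"
    using A B by (simp add: mtrace_def sum_lessThan_mult_split)
  also have "\<dots> = (\<Sum>u<a. \<Sum>v<b. A $$ (u, u) * B $$ (v, v))"
    using A B by (intro sum.cong refl) (simp add: index_kron[OF A B])
  also have "\<dots> = mtrace A * mtrace B"
    using A B by (simp add: mtrace_def sum_product)
  finally show ?thesis .
qed

lemma kron_one: "kron (1\<^sub>m a) (1\<^sub>m b) = (1\<^sub>m (a * b) :: 'a :: semiring_1 mat)"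
proof (rule eq_matI)
  fix i j assume "i < dim_row (1\<^sub>m (a * b) :: 'a mat)" "j < dim_col (1\<^sub>m (a * b) :: 'a mat)"
  then have i: "i < a * b" and j: "j < a * b" by simp_all
  obtain x k where "x < a" "k < b" "i = x * b + k" by (rule less_mult_cases[OF i])
  moreover obtain y l where "y < a" "l < b" "j = y * b + l" by (rule less_mult_cases[OF j])
  ultimately show "kron (1\<^sub>m a) (1\<^sub>m b) $$ (i, j) = (1\<^sub>m (a * b) :: 'a mat) $$ (i, j)"
    by (simp add: index_kron[OF one_carrier_mat one_carrier_mat] mult_add_less_mult
        mult_add_eq_mult_add_iff)
qed auto

lemma kron_zero_left: "kron (0\<^sub>m a c) B = (0\<^sub>m (a * dim_row B) (c * dim_col B) :: 'a :: semiring_0 mat)"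
  by (rule eq_matI) (auto simp: kron_def less_mult_imp_div_less mult.commute)

lemma kron_zero_right: "kron A (0\<^sub>m b d) = (0\<^sub>m (dim_row A * b) (dim_col A * d) :: 'a :: semiring_0 mat)"
proof (rule eq_matI)
  fix i j assume "i < dim_row (0\<^sub>m (dim_row A * b) (dim_col A * d) :: 'a mat)"
    "j < dim_col (0\<^sub>m (dim_row A * b) (dim_col A * d) :: 'a mat)"
  then have "i < dim_row A * b" "j < dim_col A * d" by simp_all
  then have "b > 0" "d > 0" by (auto intro: Nat.gr0I)
  with \<open>i < dim_row A * b\<close> \<open>j < dim_col A * d\<close>
  show "kron A (0\<^sub>m b d) $$ (i, j) = (0\<^sub>m (dim_row A * b) (dim_col A * d) :: 'a mat) $$ (i, j)"
    by (simp add: kron_def)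
qed auto

lemma mat_adjoint_kron:
  fixes A B :: "complex mat"
  shows "mat_adjoint (kron A B) = kron (mat_adjoint A) (mat_adjoint B)"
proof (rule eq_matI)
  fix i j assume "i < dim_row (kron (mat_adjoint A) (mat_adjoint B))"
    "j < dim_col (kron (mat_adjoint A) (mat_adjoint B))"
  then have i: "i < dim_col A * dim_col B" and j: "j < dim_row A * dim_row B" by simp_all
  obtain x k where "x < dim_col A" "k < dim_col B" "i = x * dim_col B + k"
    by (rule less_mult_cases[OF i])
  moreover obtain y l where "y < dim_row A" "l < dim_row B" "j = y * dim_row B + l"
    by (rule less_mult_cases[OF j])
  ultimately show "mat_adjoint (kron A B) $$ (i, j) = kron (mat_adjoint A) (mat_adjoint B) $$ (i, j)"
    by (simp add: index_kron[OF carrier_matI carrier_matI] mult_add_less_mult)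
qed auto

lemma orthogonal_projection_one: "orthogonal_projection n (1\<^sub>m n)"
  by (simp add: orthogonal_projection_def)

lemma orthogonal_projection_kron:
  assumes A: "orthogonal_projection a A" and B: "orthogonal_projection b B"
  shows "orthogonal_projection (a * b) (kron A B)"
  using orthogonal_projectionD[OF A] orthogonal_projectionD[OF B]
  by (simp add: orthogonal_projection_def kron_carrier mat_adjoint_kron kron_mult)

lemma kron_one_comm_imp_scalar:
  fixes A :: "'a :: semiring_1 mat"
  assumes A: "A \<in> carrier_mat (n * n) (n * n)" and comm: "kron A (1\<^sub>m n) = kron (1\<^sub>m n) A"
  shows "A = A $$ (0, 0) \<cdot>\<^sub>m 1\<^sub>m (n * n)"
proof -
  (* The row index (i * n + j) * n = i * (n * n) + j * n is ((i, j), 0) for kron A (1\<^sub>m n)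
     and (i, (j, 0)) for kron (1\<^sub>m n) A. *)
  have shift: "A $$ (i * n + j, i' * n + j') = (if i = i' then A $$ (j * n, j' * n) else 0)"
    if "i < n" "j < n" "i' < n" "j' < n" for i j i' j'
  proof -
    have "n > 0" using that by simp
    have "A $$ (i * n + j, i' * n + j') = kron A (1\<^sub>m n) $$ ((i * n + j) * n, (i' * n + j') * n)"
      using index_kron[OF A one_carrier_mat[of n], of "i * n + j" 0 "i' * n + j'" 0] that \<open>n > 0\<close>
      by (simp add: mult_add_less_mult)
    also have "\<dots> = kron (1\<^sub>m n) A $$ (i * (n * n) + j * n, i' * (n * n) + j' * n)"
      unfolding comm by (simp add: algebra_simps)
    also have "\<dots> = (if i = i' then A $$ (j * n, j' * n) else 0)"
      using index_kron[OF one_carrier_mat[of n] A, of i "j * n" i' "j' * n"] that \<open>n > 0\<close>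
      by (simp add: mult_add_less_mult)
    finally show ?thesis .
  qed
  show ?thesis
  proof (rule eq_matI)
    fix u v assume "u < dim_row (A $$ (0, 0) \<cdot>\<^sub>m 1\<^sub>m (n * n))" "v < dim_col (A $$ (0, 0) \<cdot>\<^sub>m 1\<^sub>m (n * n))"
    then have u: "u < n * n" and v: "v < n * n" by simp_all
    obtain i j where ij: "i < n" "j < n" "u = i * n + j" by (rule less_mult_cases[OF u])
    obtain i' j' where ij': "i' < n" "j' < n" "v = i' * n + j'" by (rule less_mult_cases[OF v])
    have "A $$ (j * n + 0, j' * n + 0) = (if j = j' then A $$ (0 * n, 0 * n) else 0)"
      using ij ij' by (intro shift) auto
    then have "A $$ (j * n, j' * n) = (if j = j' then A $$ (0, 0) else 0)"
      by simp
    moreover have "A $$ (u, v) = (if i = i' then A $$ (j * n, j' * n) else 0)"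
      using shift ij ij' by simp
    ultimately have "A $$ (u, v) = (if i = i' \<and> j = j' then A $$ (0, 0) else 0)"
      by auto
    also have "\<dots> = (A $$ (0, 0) \<cdot>\<^sub>m 1\<^sub>m (n * n)) $$ (u, v)"
      using ij ij' u v by (simp add: mult_add_eq_mult_add_iff)
    finally show "A $$ (u, v) = (A $$ (0, 0) \<cdot>\<^sub>m 1\<^sub>m (n * n)) $$ (u, v)" .
  qed (use A in auto)
qed

lemma idempotent_kron_one_comm_iff:
  fixes A :: "'a :: idom mat"
  assumes A: "A \<in> carrier_mat (n * n) (n * n)" and idem: "A * A = A"
  shows "kron A (1\<^sub>m n) = kron (1\<^sub>m n) A \<longleftrightarrow> A = 0\<^sub>m (n * n) (n * n) \<or> A = 1\<^sub>m (n * n)"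
proof
  assume comm: "kron A (1\<^sub>m n) = kron (1\<^sub>m n) A"
  show "A = 0\<^sub>m (n * n) (n * n) \<or> A = 1\<^sub>m (n * n)"
  proof (cases "n = 0")
    case True
    then show ?thesis using A by (auto intro: eq_matI)
  next
    case False
    define c where "c = A $$ (0, 0)"
    have A_c: "A = c \<cdot>\<^sub>m 1\<^sub>m (n * n)"
      unfolding c_def by (rule kron_one_comm_imp_scalar[OF A comm])
    have "A * A = c \<cdot>\<^sub>m (1\<^sub>m (n * n) * (c \<cdot>\<^sub>m 1\<^sub>m (n * n)))"
      unfolding A_c by (rule mult_smult_assoc_mat) auto
    also have "\<dots> = (c * c) \<cdot>\<^sub>m 1\<^sub>m (n * n)"
      by (rule eq_matI) auto
    finally have "(c * c) \<cdot>\<^sub>m 1\<^sub>m (n * n) = c \<cdot>\<^sub>m 1\<^sub>m (n * n)"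
      using idem A_c by simp
    then have "((c * c) \<cdot>\<^sub>m 1\<^sub>m (n * n)) $$ (0, 0) = (c \<cdot>\<^sub>m 1\<^sub>m (n * n)) $$ (0, 0)"
      by (rule arg_cong)
    then have "c * c = c"
      using False by simp
    then have "c * (c - 1) = 0" by (simp add: algebra_simps)
    then have "c = 0 \<or> c = 1" by simp
    then show ?thesis
      using A_c by (auto intro!: eq_matI)
  qed
next
  assume "A = 0\<^sub>m (n * n) (n * n) \<or> A = 1\<^sub>m (n * n)"
  then show "kron A (1\<^sub>m n) = kron (1\<^sub>m n) A"
    by (auto simp: kron_zero_left kron_zero_right kron_one mult.commute)
qed

section \<open>Trace and rank of an idempotent\<close>

lemma vec_minus_eq_0_iff:
  fixes v w :: "'a :: ab_group_add vec"
  assumes "v \<in> carrier_vec n" "w \<in> carrier_vec n"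
  shows "v - w = 0\<^sub>v n \<longleftrightarrow> v = w"
proof
  assume "v - w = 0\<^sub>v n"
  then have "\<forall>i<n. v $ i - w $ i = 0"
    using assms by (metis index_minus_vec(1) index_zero_vec(1) carrier_vecD)
  then show "v = w" using assms by (intro eq_vecI) auto
qed (use assms in simp)

lemma (in vec_space) rank_factorization:
  assumes A: "A \<in> carrier_mat n nc"
  obtains B C where "B \<in> carrier_mat n (rank A)" "C \<in> carrier_mat (rank A) nc" "A = B * C"
    "set (cols B) \<subseteq> set (cols A)"
    "\<And>x. x \<in> carrier_vec (rank A) \<Longrightarrow> B *\<^sub>v x = 0\<^sub>v n \<Longrightarrow> x = 0\<^sub>v (rank A)"
proof -
  have colsA: "set (cols A) \<subseteq> carrier_vec n" using A by (auto simp: cols_def)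
  obtain S where max: "maximal S (\<lambda>T. T \<subseteq> set (cols A) \<and> lin_indpt T)"
    using maximal_exists[of "\<lambda>T. T \<subseteq> set (cols A) \<and> lin_indpt T" "card (set (cols A))" "{}"]
    by (meson List.finite_set card_mono empty_iff empty_subsetI finite_lin_indpt2 rev_finite_subset)
  have SA: "S \<subseteq> set (cols A)" and indS: "lin_indpt S" using max by (auto simp: maximal_def)
  have finS: "finite S" and SC: "S \<subseteq> carrier_vec n" using SA colsA finite_subset by auto
  obtain bs where bs: "set bs = S" "distinct bs" using finite_distinct_list[OF finS] by blast
  have r: "length bs = rank A"
    using rank_card_indpt[OF A max] bs distinct_card by fastforce
  define B where "B = mat_of_cols n bs"
  have B: "B \<in> carrier_mat n (rank A)" unfolding B_def r[symmetric] by simp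
  have colsB: "cols B = bs" unfolding B_def using bs SC by simp
  have span: "v \<in> span S" if "v \<in> set (cols A)" for v
  proof (rule ccontr)
    assume v: "v \<notin> span S"
    then have "v \<notin> S" using in_own_span[OF SC] by auto
    then have "lin_indpt (S \<union> {v})"
      using lin_dep_iff_in_span[OF SC indS] v that colsA by auto
    moreover have "S \<subset> S \<union> {v}" "S \<union> {v} \<subseteq> set (cols A)" using \<open>v \<notin> S\<close> SA that by auto
    ultimately show False using max unfolding maximal_def by blast
  qed
  have "\<exists>c. c \<in> carrier_vec (rank A) \<and> B *\<^sub>v c = col A j" if j: "j < nc" for j
  proof -
    have "col A j \<in> span S" using j A by (intro span) (auto simp: cols_def)
    then obtain a where "lincomb a S = col A j" using finite_in_span[OF finS SC] by blast
    moreover have "B *\<^sub>v vec (rank A) (\<lambda>i. a (col B i)) = lincomb a S"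
      using mat_mult_eq_lincomb[OF B] colsB bs by simp
    ultimately show ?thesis by (intro exI[of _ "vec (rank A) (\<lambda>i. a (col B i))"]) auto
  qed
  then obtain c where c: "\<And>j. j < nc \<Longrightarrow> c j \<in> carrier_vec (rank A) \<and> B *\<^sub>v c j = col A j"
    by metis
  define C where "C = mat (rank A) nc (\<lambda>(i, j). c j $ i)"
  have C: "C \<in> carrier_mat (rank A) nc" by (simp add: C_def)
  have BC: "A = B * C"
  proof (rule eq_matI)
    fix i j assume "i < dim_row (B * C)" "j < dim_col (B * C)"
    then have i: "i < n" and j: "j < nc" using B C by auto
    have "col C j = c j" using c[OF j] j unfolding C_def by (intro eq_vecI) auto
    then have "(B * C) $$ (i, j) = (B *\<^sub>v c j) $ i" using B C i j by simp
    then show "A $$ (i, j) = (B * C) $$ (i, j)" using c[OF j] A i j by simp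
  qed (use A B C in auto)
  have "set (cols B) \<subseteq> set (cols A)" using colsB bs SA by simp
  moreover have "x = 0\<^sub>v (rank A)" if "x \<in> carrier_vec (rank A)" "B *\<^sub>v x = 0\<^sub>v n" for x
    using lin_depI[OF B that(1) _ that(2)] indS colsB bs by auto
  ultimately show ?thesis by (rule that[OF B C BC])
qed

lemma (in vec_space) mtrace_idempotent_eq_rank:
  assumes P: "P \<in> carrier_mat n n" and idem: "P * P = P"
  shows "mtrace P = of_nat (rank P)"
proof -
  obtain B C where B: "B \<in> carrier_mat n (rank P)" and C: "C \<in> carrier_mat (rank P) n"
    and BC: "P = B * C" and colsB: "set (cols B) \<subseteq> set (cols P)"
    and inj: "\<And>x. x \<in> carrier_vec (rank P) \<Longrightarrow> B *\<^sub>v x = 0\<^sub>v n \<Longrightarrow> x = 0\<^sub>v (rank P)"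
    by (rule rank_factorization[OF P]) blast
  have PB: "P * B = B"
  proof (rule mat_col_eqI)
    fix j assume "j < dim_col B"
    then have j: "j < rank P" using B by simp
    have "P *\<^sub>v col B j = col B j"
    proof -
      have "col B j \<in> set (cols P)"
        using colsB j B by (auto simp: cols_def)
      then obtain k where k: "k < n" "col B j = col P k"
        using P by (auto simp: cols_def)
      have "P *\<^sub>v col P k = col (P * P) k" by (rule col_mult2[OF P P k(1), symmetric])
      then show ?thesis using k idem by simp
    qed
    then show "col (P * B) j = col B j" using col_mult2[OF P B j] by simp
  qed (use P B in auto)
  have "C * B = 1\<^sub>m (rank P)"
  proof (rule mat_col_eqI)
    fix j assume "j < dim_col (1\<^sub>m (rank P) :: 'a mat)"
    then have j: "j < rank P" by simp
    have "B *\<^sub>v col (C * B) j = col (B * (C * B)) j"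
      by (rule col_mult2[OF B mult_carrier_mat[OF C B] j, symmetric])
    also have "B * (C * B) = B * 1\<^sub>m (rank P)"
      using B C by (simp add: assoc_mult_mat[OF B C B, symmetric] BC[symmetric] PB)
    also have "col (B * 1\<^sub>m (rank P)) j = B *\<^sub>v unit_vec (rank P) j"
      using col_mult2[OF B one_carrier_mat j] j by simp
    finally have "B *\<^sub>v col (C * B) j = B *\<^sub>v unit_vec (rank P) j" .
    then have "B *\<^sub>v (col (C * B) j - unit_vec (rank P) j) = 0\<^sub>v n"
      using B C j by (simp add: mult_minus_distrib_mat_vec)
    then show "col (C * B) j = col (1\<^sub>m (rank P)) j"
      using inj[of "col (C * B) j - unit_vec (rank P) j"] B C j
      by (simp add: vec_minus_eq_0_iff[of _ "rank P"])
  qed (use B C in auto)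
  then show ?thesis
    using mtrace_mult_comm[OF B C] BC by simp
qed

theorem lemma1:
  fixes n r :: nat and P :: "complex mat"
  assumes "n \<ge> 2"
    and "P \<in> carrier_mat (n^2) (n^2)"
    and "mat_adjoint P = P"
    and "P * P = P"
    and "vec_space.rank (n^2) P = r"
  defines "P1 \<equiv> kron P (1\<^sub>m n)"
    and "P2 \<equiv> kron (1\<^sub>m n) P"
  shows "mtrace (P1 * P2) \<in> \<real>
         \<and> Re (mtrace (P1 * P2)) \<le> real (r * n)
         \<and> (mtrace (P1 * P2) = of_nat (r * n) \<longleftrightarrow>
              P = 0\<^sub>m (n^2) (n^2) \<or> P = kron (1\<^sub>m n) (1\<^sub>m n))
         \<and> mtrace ((P1 * P2) * (P1 * P2)) \<in> \<real>
         \<and> Re (mtrace ((P1 * P2) * (P1 * P2))) \<le> Re (mtrace (P1 * P2))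
         \<and> (mtrace ((P1 * P2) * (P1 * P2)) = mtrace (P1 * P2) \<longleftrightarrow> P1 * P2 = P2 * P1)"
proof -
  have sq: "n^2 = n * n" by (simp add: power2_eq_square)
  have P: "P \<in> carrier_mat (n * n) (n * n)" and proj: "orthogonal_projection (n * n) P"
    using assms(2-4) by (simp_all add: sq orthogonal_projection_def)
  have tr_P: "mtrace P = of_nat r"
    using vec_space.mtrace_idempotent_eq_rank[OF assms(2,4)] assms(5) by simp
  have proj1: "orthogonal_projection (n * n * n) P1"
    unfolding P1_def by (rule orthogonal_projection_kron[OF proj orthogonal_projection_one])
  have proj2: "orthogonal_projection (n * n * n) P2"
    using orthogonal_projection_kron[OF orthogonal_projection_one proj]
    unfolding P2_def by (simp add: mult.assoc)
  have tr1: "mtrace P1 = of_nat (r * n)" and tr2: "mtrace P2 = of_nat (r * n)"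
    unfolding P1_def P2_def using tr_P
    by (simp_all add: mtrace_kron[OF P one_carrier_mat] mtrace_kron[OF one_carrier_mat P])
  have "mtrace (P1 * P2) = of_nat (r * n) \<longleftrightarrow> P1 = P2"
    using mtrace_proj_mult_eq_iff[OF proj1 proj2] tr1 tr2 by simp
  also have "\<dots> \<longleftrightarrow> P = 0\<^sub>m (n^2) (n^2) \<or> P = kron (1\<^sub>m n) (1\<^sub>m n)"
    unfolding P1_def P2_def idempotent_kron_one_comm_iff[OF P assms(4)] kron_one sq ..
  finally show ?thesis
    using mtrace_proj_mult[OF proj1 proj2] mtrace_proj_mult_square[OF proj1 proj2] tr1 by simp
qed

end
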